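(* Consider the iterative minimum repairing algorithm IMR($p$) described in the context. If the estimated parameters converge, i.e. $\lim_{k\to+\infty}\phi^{(k)}=\phi$ for some $\phi\in\mathbb{R}^p$, then the repair also converges: $$\lim_{k\to+\infty}\sum_{i=1}^n\left(y_i^{(k+1)}-y_i^{(k)}\right)=0.$$
   Context: Let $n\ge 1$ and let $x=(x_1,\dots,x_n)\in\mathbb{R}^n$ be an observed time series. A set $L\subseteq\{1,\dots,n\}$ of labeled indices is given, together with labeled values $y^{(0)}_t$ for $t\in L$; for $t\notin L$ put $y^{(0)}_t=x_t$. Fix an order $p\ge 1$ and a threshold $\tau\ge 0$. IMR($p$) produces sequences $y^{(k)}\in\mathbb{R}^n$, $k=0,1,2,\dots$; write $z^{(k)}_t=y^{(k)}_t-x_t$. In iteration $k$: (S1) Parameter estimation by ordinary least squares: $\phi^{(k)}=(\phi^{(k)}_1,\dots,\phi^{(k)}_p)^\top=((Z^{(k)})^\top Z^{(k)})^{-1}(Z^{(k)})^\top V^{(k)}$, where $V^{(k)}=(z^{(k)}_{p+1},\dots,z^{(k)}_n)^\top$ and $Z^{(k)}$ is the $(n-p)\times p$ matrix whose $r$-th row ($r=1,\dots,n-p$) is $(z^{(k)}_{r+p-1},z^{(k)}_{r+p-2},\dots,z^{(k)}_{r})$. (S2) For each $t\in\{p+1,\dots,n\}\setminus L$ compute $\hat y^{(k)}_t=\sum_{i=1}^p\phi^{(k)}_i z^{(k)}_{t-i}+x_t$; $t$ is a candidate only if $|\hat y^{(k)}_t-y^{(k)}_t|>\tau$. (S3) If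 candidates exist, choose a candidate $t^*$ minimizing $|\hat y^{(k)}_t-x_t|$ (ties broken arbitrarily), set $y^{(k+1)}_{t^*}=\hat y^{(k)}_{t^*}$ and keep all other values; if no candidate exists, the algorithm terminates and $y^{(k+1)}=y^{(k)}$ from then on. Labeled values are never modified. *)

theory Defs
  imports Complex_Main "Jordan_Normal_Form.Gauss_Jordan_Elimination"
begin

text \<open>Series are functions on indices 1..n (values at other indices are irrelevant).
  z is the repair deviation z_t = y_t - x_t.\<close>

text \<open>Design matrix Z ((n-p) x p, 0-indexed): row r (r = 0..n-p-1) is
  (z_{r+p}, z_{r+p-1}, ..., z_{r+1}), i.e. entry (r,c) is z_{r+p-c}.\<close>
definition imr_Z :: "nat \<Rightarrow> nat \<Rightarrow> (nat \<Rightarrow> real) \<Rightarrow> real mat" where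
  "imr_Z n p z = mat (n - p) p (\<lambda>(r, c). z (r + p - c))"

definition imr_V :: "nat \<Rightarrow> nat \<Rightarrow> (nat \<Rightarrow> real) \<Rightarrow> real vec" where
  "imr_V n p z = vec (n - p) (\<lambda>r. z (r + p + 1))"

definition imr_gram :: "nat \<Rightarrow> nat \<Rightarrow> (nat \<Rightarrow> real) \<Rightarrow> real mat" where
  "imr_gram n p z = transpose_mat (imr_Z n p z) * imr_Z n p z"

text \<open>OLS estimate ((Z^T Z)^{-1} Z^T V), returned as phi_1..phi_p (phi i for i in 1..p).\<close>
definition imr_phi :: "nat \<Rightarrow> nat \<Rightarrow> (nat \<Rightarrow> real) \<Rightarrow> nat \<Rightarrow> real" where
  "imr_phi n p z i =
     (the (mat_inverse (imr_gram n p z)) *\<^sub>v (transpose_mat (imr_Z n p z) *\<^sub>v imr_V n p z)) $ (i - 1)"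

definition imr_yhat :: "nat \<Rightarrow> nat \<Rightarrow> (nat \<Rightarrow> real) \<Rightarrow> (nat \<Rightarrow> real) \<Rightarrow> nat \<Rightarrow> real" where
  "imr_yhat n p x y t =
     (\<Sum>i=1..p. imr_phi n p (\<lambda>s. y s - x s) i * (y (t - i) - x (t - i))) + x t"

definition imr_cand :: "nat \<Rightarrow> nat \<Rightarrow> real \<Rightarrow> nat set \<Rightarrow> (nat \<Rightarrow> real) \<Rightarrow> (nat \<Rightarrow> real) \<Rightarrow> nat set" where
  "imr_cand n p \<tau> L x y =
     {t \<in> {p+1..n} - L. \<bar>imr_yhat n p x y t - y t\<bar> > \<tau>}"

text \<open>One IMR(p) iteration from y to y' (ties broken arbitrarily, labeled values untouched).\<close>
definition imr_step :: "nat \<Rightarrow> nat \<Rightarrow> real \<Rightarrow> nat set \<Rightarrow> (nat \<Rightarrow> real) \<Rightarrow> (nat \<Rightarrow> real) \<Rightarrow> (nat \<Rightarrow> real) \<Rightarrow> bool" where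
  "imr_step n p \<tau> L x y y' \<longleftrightarrow>
     (if imr_cand n p \<tau> L x y = {} then (\<forall>t\<in>{1..n}. y' t = y t)
      else (\<exists>t\<^sub>0 \<in> imr_cand n p \<tau> L x y.
              (\<forall>t \<in> imr_cand n p \<tau> L x y.
                  \<bar>imr_yhat n p x y t\<^sub>0 - x t\<^sub>0\<bar> \<le> \<bar>imr_yhat n p x y t - x t\<bar>) \<and>
              y' t\<^sub>0 = imr_yhat n p x y t\<^sub>0 \<and>
              (\<forall>t\<in>{1..n} - {t\<^sub>0}. y' t = y t)))"

definition imr_run :: "nat \<Rightarrow> nat \<Rightarrow> real \<Rightarrow> nat set \<Rightarrow> (nat \<Rightarrow> real) \<Rightarrow> (nat \<Rightarrow> real)
    \<Rightarrow> (nat \<Rightarrow> nat \<Rightarrow> real) \<Rightarrow> bool" where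
  "imr_run n p \<tau> L x yL y \<longleftrightarrow>
     (\<forall>t\<in>{1..n}. y 0 t = (if t \<in> L then yL t else x t)) \<and>
     (\<forall>k. invertible_mat (imr_gram n p (\<lambda>s. y k s - x s))) \<and>
     (\<forall>k. imr_step n p \<tau> L x (y k) (y (Suc k)))"

end

theory Submission
  imports Defs
begin

text \<open>In every iteration a coordinate t either keeps its value or is replaced by the prediction
  at t, which is a continuous function of the parameter estimate and of the coordinates
  t - 1, ..., t - p only. A real sequence that at each step either stays put or jumps onto a
  convergent sequence converges, so by strong induction on t every coordinate of the repair
  converges once the estimates do; hence the increments tend to 0.\<close>

lemma convergent_stay_or_jump:
  fixes a g :: "nat \<Rightarrow> real"
  assumes "g \<longlonglongrightarrow> l" and stay_or_jump: "\<And>k. a (Suc k) = a k \<or> a (Suc k) = g k"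
  shows "convergent a"
  unfolding Cauchy_convergent_iff [symmetric]
proof (rule CauchyI)
  fix e :: real
  assume "e > 0"
  then obtain N where N: "\<And>k. k \<ge> N \<Longrightarrow> \<bar>g k - l\<bar> < e/2"
    using LIMSEQ_D [OF \<open>g \<longlonglongrightarrow> l\<close>, of "e/2"] by auto
  show "\<exists>M. \<forall>m\<ge>M. \<forall>n\<ge>M. norm (a m - a n) < e"
  proof (cases "\<exists>k\<^sub>0\<ge>N. a (Suc k\<^sub>0) = g k\<^sub>0")
    case True
    then obtain k\<^sub>0 where "k\<^sub>0 \<ge> N" "a (Suc k\<^sub>0) = g k\<^sub>0"
      by blast
    have close: "\<bar>a k - l\<bar> < e/2" if "k \<ge> Suc k\<^sub>0" for k
      using that
    proof (induction k rule: dec_induct)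
      case base
      then show ?case using \<open>k\<^sub>0 \<ge> N\<close> \<open>a (Suc k\<^sub>0) = g k\<^sub>0\<close> N by simp
    next
      case (step m)
      then show ?case using stay_or_jump [of m] N [of m] \<open>k\<^sub>0 \<ge> N\<close> by auto
    qed
    have "\<bar>a m - a n\<bar> < e" if "m \<ge> Suc k\<^sub>0" "n \<ge> Suc k\<^sub>0" for m n
      using close [OF that(1)] close [OF that(2)] by linarith
    then show ?thesis
      by auto
  next
    case False
    have const: "a k = a N" if "k \<ge> N" for k
      using that
    proof (induction k rule: dec_induct)
      case (step m)
      then show ?case using stay_or_jump [of m] False by auto
    qed simp
    show ?thesis
    proof (intro exI [of _ N] allI impI)
      fix m n
      assume "m \<ge> N" "n \<ge> N"
      then show "norm (a m - a n) < e"
        using const [of m] const [of n] \<open>e > 0\<close> by simp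
    qed
  qed
qed

lemma imr_step_value:
  assumes "imr_step n p \<tau> L x y y'" and "t \<in> {1..n}"
  shows "y' t = y t \<or> (t \<in> {p+1..n} \<and> y' t = imr_yhat n p x y t)"
proof (cases "imr_cand n p \<tau> L x y = {}")
  case True
  then show ?thesis using assms unfolding imr_step_def by auto
next
  case False
  then obtain t\<^sub>0 where "t\<^sub>0 \<in> imr_cand n p \<tau> L x y" "y' t\<^sub>0 = imr_yhat n p x y t\<^sub>0"
      "\<forall>t\<in>{1..n} - {t\<^sub>0}. y' t = y t"
    using assms(1) unfolding imr_step_def by auto
  moreover have "t\<^sub>0 \<in> {p+1..n}"
    using \<open>t\<^sub>0 \<in> imr_cand n p \<tau> L x y\<close> unfolding imr_cand_def by auto
  ultimately show ?thesis using assms(2) by (cases "t = t\<^sub>0") auto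
qed

lemma convergent_imr_yhat:
  assumes "\<And>i. i \<in> {1..p} \<Longrightarrow> convergent (\<lambda>k. imr_phi n p (\<lambda>s. y k s - x s) i)"
    and "\<And>i. i \<in> {1..p} \<Longrightarrow> convergent (\<lambda>k. y k (t - i))"
  shows "convergent (\<lambda>k. imr_yhat n p x (y k) t)"
  unfolding imr_yhat_def
  by (intro convergent_add convergent_const convergent_sum convergent_mult convergent_diff assms)

lemma imr_coordinate_convergent:
  assumes steps: "\<And>k. imr_step n p \<tau> L x (y k) (y (Suc k))"
    and phi: "\<And>i. i \<in> {1..p} \<Longrightarrow> convergent (\<lambda>k. imr_phi n p (\<lambda>s. y k s - x s) i)"
    and "t \<in> {1..n}"
  shows "convergent (\<lambda>k. y k t)"
  using \<open>t \<in> {1..n}\<close>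
proof (induction t rule: less_induct)
  case (less t)
  show ?case
  proof (cases "t \<ge> p + 1")
    case False
    then have "y (Suc k) t = y k t" for k
      using imr_step_value [OF steps less.prems] by auto
    then show ?thesis
      by (intro convergent_stay_or_jump [OF tendsto_const]) simp
  next
    case True
    then have "convergent (\<lambda>k. y k (t - i))" if "i \<in> {1..p}" for i
      using less that by auto
    then have "convergent (\<lambda>k. imr_yhat n p x (y k) t)"
      by (intro convergent_imr_yhat phi)
    then obtain l where "(\<lambda>k. imr_yhat n p x (y k) t) \<longlonglongrightarrow> l"
      unfolding convergent_def by blast
    then show ?thesis
      by (rule convergent_stay_or_jump) (use imr_step_value [OF steps less.prems] in blast)
  qed
qed

theorem proposition3:
  fixes n p :: nat and \<tau> :: real and L :: "nat set"
    and x yL :: "nat \<Rightarrow> real" and y :: "nat \<Rightarrow> nat \<Rightarrow> real" and \<phi> :: "nat \<Rightarrow> real"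
  assumes "n \<ge> 1" and "p \<ge> 1" and "\<tau> \<ge> 0" and "L \<subseteq> {1..n}"
    and "imr_run n p \<tau> L x yL y"
    and "\<forall>i\<in>{1..p}. (\<lambda>k. imr_phi n p (\<lambda>s. y k s - x s) i) \<longlonglongrightarrow> \<phi> i"
  shows "(\<lambda>k. \<Sum>i=1..n. y (Suc k) i - y k i) \<longlonglongrightarrow> 0"
proof (rule tendsto_null_sum)
  fix t
  assume "t \<in> {1..n}"
  have "\<And>k. imr_step n p \<tau> L x (y k) (y (Suc k))"
    using \<open>imr_run n p \<tau> L x yL y\<close> unfolding imr_run_def by blast
  moreover have "\<And>i. i \<in> {1..p} \<Longrightarrow> convergent (\<lambda>k. imr_phi n p (\<lambda>s. y k s - x s) i)"
    using assms(6) unfolding convergent_def by blast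
  ultimately have "convergent (\<lambda>k. y k t)"
    using \<open>t \<in> {1..n}\<close> by (rule imr_coordinate_convergent)
  then obtain l where lim: "(\<lambda>k. y k t) \<longlonglongrightarrow> l"
    unfolding convergent_def by blast
  show "(\<lambda>k. y (Suc k) t - y k t) \<longlonglongrightarrow> 0"
    using tendsto_diff [OF LIMSEQ_Suc [OF lim] lim] by simp
qed

end
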